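(* Let $G$ be an edge-coloured multigraph, $t \ge 5$, $M$ a rainbow matching of maximum size in $G$, $C_0$ the set of colours not used on $M$, and $N$ a $t$-auxiliary matching for $M$. Then (i) there is no $(C_0 \cup C_N)$-coloured edge vertex-disjoint from the matching $N \cup (M\setminus M_N)$, and (ii) there is no $(C_0\cup C_N)$-rainbow horn in the matching $N \cup (M \setminus M_N)$.
   Context: A rainbow matching is a matching whose edges have pairwise distinct colours; an edge is $C$-coloured if its colour lies in $C$. Let $V$ be the vertex set of $G$. For a rainbow matching $M$ with unused colour set $C_0$, a $t$-auxiliary matching for $M$ is a matching $N$ each of whose edges has one endpoint in $V\setminus V(M)$ and the other in $V(M)$, such that for each edge of $N$ its pair of endpoints is joined by edges of at least $t$ distinct colours from $C_0$, and no two edges of $N$ intersect the same edge of $M$. $M_N \subseteq M$ is the set of edges of $M$ intersecting an edge of $N$, and $C_N$ is the set of colours of the edges of $M_N$. For a matching $L$, a $C$-rainbow horn in $L$ is an edge $e\in L$ such that there exist two vertex-disjoint edges $e_1,e_2$, each with one endpoint in $e$ and the other in $V\setminus V(L)$, of two distinct colours $c_1,c_2\in C$. *)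

theory Defs
  imports Main
begin

text \<open>An edge-coloured multigraph: vertex set V, edge set E (edges are abstract objects,
so parallel edges are allowed), endpoint map ends and colouring col.\<close>

definition multigraph :: "'v set \<Rightarrow> 'e set \<Rightarrow> ('e \<Rightarrow> 'v set) \<Rightarrow> bool" where
  "multigraph V E ends \<longleftrightarrow> finite V \<and> finite E \<and>
     (\<forall>e\<in>E. ends e \<subseteq> V \<and> card (ends e) = 2)"

definition matching :: "'e set \<Rightarrow> ('e \<Rightarrow> 'v set) \<Rightarrow> 'e set \<Rightarrow> bool" where
  "matching E ends M \<longleftrightarrow> M \<subseteq> E \<and>
     (\<forall>e\<in>M. \<forall>f\<in>M. e \<noteq> f \<longrightarrow> ends e \<inter> ends f = {})"

definition rainbow_matching ::
  "'e set \<Rightarrow> ('e \<Rightarrow> 'v set) \<Rightarrow> ('e \<Rightarrow> 'c) \<Rightarrow> 'e set \<Rightarrow> bool" where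
  "rainbow_matching E ends col M \<longleftrightarrow> matching E ends M \<and> inj_on col M"

definition max_rainbow_matching ::
  "'e set \<Rightarrow> ('e \<Rightarrow> 'v set) \<Rightarrow> ('e \<Rightarrow> 'c) \<Rightarrow> 'e set \<Rightarrow> bool" where
  "max_rainbow_matching E ends col M \<longleftrightarrow> rainbow_matching E ends col M \<and>
     (\<forall>M'. rainbow_matching E ends col M' \<longrightarrow> card M' \<le> card M)"

definition unused_colours :: "('e \<Rightarrow> 'c) \<Rightarrow> 'e set \<Rightarrow> 'c set" where
  "unused_colours col M = - (col ` M)"

definition VM :: "('e \<Rightarrow> 'v set) \<Rightarrow> 'e set \<Rightarrow> 'v set" where
  "VM ends M = \<Union> (ends ` M)"

text \<open>A t-auxiliary matching N for M: a set of vertex pairs (not necessarily edges of G).\<close>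
definition aux_matching ::
  "nat \<Rightarrow> 'v set \<Rightarrow> 'e set \<Rightarrow> ('e \<Rightarrow> 'v set) \<Rightarrow> ('e \<Rightarrow> 'c) \<Rightarrow> 'e set \<Rightarrow> 'v set set \<Rightarrow> bool" where
  "aux_matching t V E ends col M N \<longleftrightarrow>
     (\<forall>x\<in>N. \<exists>u v. x = {u, v} \<and> u \<in> V - VM ends M \<and> v \<in> VM ends M) \<and>
     (\<forall>x\<in>N. \<forall>y\<in>N. x \<noteq> y \<longrightarrow> x \<inter> y = {}) \<and>
     (\<forall>x\<in>N. t \<le> card {c \<in> unused_colours col M. \<exists>e\<in>E. ends e = x \<and> col e = c}) \<and>
     (\<forall>x\<in>N. \<forall>y\<in>N. x \<noteq> y \<longrightarrow>
        \<not> (\<exists>e\<in>M. x \<inter> ends e \<noteq> {} \<and> y \<inter> ends e \<noteq> {}))"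

definition M_N :: "('e \<Rightarrow> 'v set) \<Rightarrow> 'e set \<Rightarrow> 'v set set \<Rightarrow> 'e set" where
  "M_N ends M N = {e \<in> M. \<exists>x\<in>N. ends e \<inter> x \<noteq> {}}"

definition C_N :: "('e \<Rightarrow> 'v set) \<Rightarrow> ('e \<Rightarrow> 'c) \<Rightarrow> 'e set \<Rightarrow> 'v set set \<Rightarrow> 'c set" where
  "C_N ends col M N = col ` M_N ends M N"

definition rainbow_horn ::
  "'e set \<Rightarrow> ('e \<Rightarrow> 'v set) \<Rightarrow> ('e \<Rightarrow> 'c) \<Rightarrow> 'c set \<Rightarrow> 'v set set \<Rightarrow> 'v set \<Rightarrow> bool" where
  "rainbow_horn E ends col C L x \<longleftrightarrow> x \<in> L \<and>
     (\<exists>e1\<in>E. \<exists>e2\<in>E. ends e1 \<inter> ends e2 = {} \<and>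
        col e1 \<in> C \<and> col e2 \<in> C \<and> col e1 \<noteq> col e2 \<and>
        ends e1 \<inter> x \<noteq> {} \<and> ends e1 - \<Union>L \<noteq> {} \<and>
        ends e2 \<inter> x \<noteq> {} \<and> ends e2 - \<Union>L \<noteq> {})"

end

(*
  An exchange argument against the maximality of M. Given a rainbow set P of new edges with
  colours in C0 \<union> C_N, drop from M the edges F forced by where P attaches, and the set R of
  edges of M_N sharing a vertex or a colour with P. Every edge of R meets a pair of N carrying
  at least t colours unused on M, so the edges of R can be replaced one at a time by edges on
  these pairs with fresh unused colours, as long as fewer than t colours are blocked; at most
  |B| + |P| are, B being the endpoints of P away from the forced edges. This yields a rainbow
  matching with |M| - |F| + |P| edges. A free edge gives |P| = 1, |F| = 0 with three blocked
  colours; a rainbow horn on a pair of N \<union> (M - M_N) gives |P| = 2, |F| = 1 with four, so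
  t \<ge> 4 already suffices.
*)

theory Submission
  imports Defs
begin

lemma matching_common_vertex_eq:
  assumes "matching E ends M" "r \<in> M" "r' \<in> M" "z \<in> ends r" "z \<in> ends r'"
  shows "r = r'"
  using assms unfolding matching_def by blast

lemma card_matching_edges_meeting_le:
  assumes "matching E ends M" "finite M" "finite B"
  shows "card {r \<in> M. ends r \<inter> B \<noteq> {}} \<le> card B"
proof -
  have at_most_one: "card {r \<in> M. b \<in> ends r} \<le> 1" for b
  proof -
    have "\<forall>r\<in>{r \<in> M. b \<in> ends r}. \<forall>r'\<in>{r \<in> M. b \<in> ends r}. r = r'"
      using matching_common_vertex_eq[OF assms(1)] by blast
    then show ?thesis using card_le_Suc0_iff_eq[of "{r \<in> M. b \<in> ends r}"] assms(2) by simp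
  qed
  have "{r \<in> M. ends r \<inter> B \<noteq> {}} = (\<Union>b\<in>B. {r \<in> M. b \<in> ends r})" by auto
  also have "card \<dots> \<le> (\<Sum>b\<in>B. card {r \<in> M. b \<in> ends r})" by (rule card_UN_le[OF assms(3)])
  also have "\<dots> \<le> (\<Sum>b\<in>B. 1)" by (rule sum_mono[OF at_most_one])
  finally show ?thesis by simp
qed

lemma card_rainbow_edges_coloured_le:
  assumes "rainbow_matching E ends col M" "finite S"
  shows "card {r \<in> M. col r \<in> S} \<le> card (S - unused_colours col M)"
proof -
  have "inj_on col {r \<in> M. col r \<in> S}"
    using assms(1) unfolding rainbow_matching_def by (auto intro: inj_on_subset)
  then have "card {r \<in> M. col r \<in> S} = card (col ` {r \<in> M. col r \<in> S})"
    by (rule card_image[symmetric])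
  also have "\<dots> \<le> card (S - unused_colours col M)"
    using assms(2) by (intro card_mono) (auto simp: unused_colours_def)
  finally show ?thesis .
qed

lemma rainbow_matching_subset:
  assumes "rainbow_matching E ends col S" "T \<subseteq> S"
  shows "rainbow_matching E ends col T"
  using assms unfolding rainbow_matching_def matching_def by (meson inj_on_subset subset_iff)

lemma rainbow_matching_singleton:
  "e \<in> E \<Longrightarrow> rainbow_matching E ends col {e}"
  unfolding rainbow_matching_def matching_def by simp

lemma rainbow_matching_Un:
  assumes "rainbow_matching E ends col A" "rainbow_matching E ends col B"
    and apart: "\<And>a b. a \<in> A \<Longrightarrow> b \<in> B \<Longrightarrow> ends a \<inter> ends b = {} \<and> col a \<noteq> col b"
  shows "rainbow_matching E ends col (A \<union> B)"
proof -
  have A: "A \<subseteq> E" "\<forall>e\<in>A. \<forall>f\<in>A. e \<noteq> f \<longrightarrow> ends e \<inter> ends f = {}" "inj_on col A"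
    and B: "B \<subseteq> E" "\<forall>e\<in>B. \<forall>f\<in>B. e \<noteq> f \<longrightarrow> ends e \<inter> ends f = {}" "inj_on col B"
    using assms(1,2) unfolding rainbow_matching_def matching_def by simp_all
  have "col ` (A - B) \<inter> col ` (B - A) = {}" using apart by fastforce
  then have "inj_on col (A \<union> B)" using A(3) B(3) by (simp add: inj_on_Un)
  moreover have "ends e \<inter> ends f = {}" if "e \<in> A \<union> B" "f \<in> A \<union> B" "e \<noteq> f" for e f
    using that(1,2)
  proof (elim UnE)
    show "e \<in> A \<Longrightarrow> f \<in> A \<Longrightarrow> ?thesis" using A(2) that(3) by blast
    show "e \<in> B \<Longrightarrow> f \<in> B \<Longrightarrow> ?thesis" using B(2) that(3) by blast
    show "e \<in> A \<Longrightarrow> f \<in> B \<Longrightarrow> ?thesis" using apart by blast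
    show "e \<in> B \<Longrightarrow> f \<in> A \<Longrightarrow> ?thesis" using apart[of f e] by (simp add: Int_commute)
  qed
  ultimately show ?thesis using A(1) B(1) unfolding rainbow_matching_def matching_def by blast
qed

lemma aux_matching_pairE:
  assumes "aux_matching t V E ends col M N" "y \<in> N"
  obtains u v where "y = {u, v}" "u \<notin> VM ends M" "v \<in> VM ends M"
proof -
  have "\<forall>x\<in>N. \<exists>u v. x = {u, v} \<and> u \<in> V - VM ends M \<and> v \<in> VM ends M"
    using assms(1) unfolding aux_matching_def by (elim conjE) assumption
  with assms(2) that show thesis by blast
qed

lemma aux_matching_pairs_disjoint:
  assumes "aux_matching t V E ends col M N" "x \<in> N" "y \<in> N" "x \<noteq> y"
  shows "x \<inter> y = {}"
proof -
  have "\<forall>x\<in>N. \<forall>y\<in>N. x \<noteq> y \<longrightarrow> x \<inter> y = {}"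
    using assms(1) unfolding aux_matching_def by (elim conjE) assumption
  with assms(2-4) show ?thesis by blast
qed

lemma aux_matching_colours:
  assumes "aux_matching t V E ends col M N" "y \<in> N"
  shows "t \<le> card {c \<in> unused_colours col M. \<exists>e\<in>E. ends e = y \<and> col e = c}"
proof -
  have "\<forall>x\<in>N. t \<le> card {c \<in> unused_colours col M. \<exists>e\<in>E. ends e = x \<and> col e = c}"
    using assms(1) unfolding aux_matching_def by (elim conjE) assumption
  with assms(2) show ?thesis by blast
qed

lemma aux_pair_meets_one_edge:
  assumes "aux_matching t V E ends col M N" "matching E ends M" "y \<in> N"
    "r \<in> M" "r' \<in> M" "y \<inter> ends r \<noteq> {}" "y \<inter> ends r' \<noteq> {}"
  shows "r = r'"
proof -
  obtain u v where y: "y = {u, v}" "u \<notin> VM ends M" by (rule aux_matching_pairE[OF assms(1,3)])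
  have "u \<notin> ends r" "u \<notin> ends r'" using y(2) assms(4,5) unfolding VM_def by auto
  then have "v \<in> ends r" "v \<in> ends r'" using assms(6,7) y(1) by auto
  then show ?thesis using matching_common_vertex_eq[OF assms(2,4,5)] by blast
qed

lemma mem_M_N_if_colour:
  assumes "rainbow_matching E ends col M" "k \<in> M"
    "col k \<in> unused_colours col M \<union> C_N ends col M N"
  shows "k \<in> M_N ends M N"
proof -
  have "col k \<notin> unused_colours col M" using assms(2) unfolding unused_colours_def by auto
  then obtain r where r: "r \<in> M_N ends M N" "col r = col k"
    using assms(3) unfolding C_N_def by auto
  then have "r = k"
    using assms(1,2) unfolding rainbow_matching_def inj_on_def M_N_def by auto
  then show ?thesis using r(1) by simp
qed

lemma aux_pair_edge_avoiding_colours: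
  assumes "aux_matching t V E ends col M N" "y \<in> N" "finite F" "card F < t"
  obtains g where "g \<in> E" "ends g = y" "col g \<in> unused_colours col M" "col g \<notin> F"
proof -
  let ?S = "{c \<in> unused_colours col M. \<exists>e\<in>E. ends e = y \<and> col e = c}"
  have "card F < card ?S" using aux_matching_colours[OF assms(1,2)] assms(4) by linarith
  then have "\<not> ?S \<subseteq> F" by (meson card_mono[OF assms(3)] not_le)
  then show thesis using that by blast
qed

lemma rainbow_matching_add_aux_edge:
  assumes aux: "aux_matching t V E ends col M N" and mM: "matching E ends M"
    and y: "y \<in> N" "r \<in> M" "y \<inter> ends r \<noteq> {}" and "K \<subseteq> M" "r \<notin> K"
    and KP: "rainbow_matching E ends col (K \<union> P)" and P_avoids_y: "\<forall>p\<in>P. ends p \<inter> y = {}"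
    and g: "g \<in> E" "ends g = y" "col g \<in> unused_colours col M" "col g \<notin> col ` P"
  shows "rainbow_matching E ends col (K \<union> insert g P)"
proof -
  have "ends a \<inter> ends g = {} \<and> col a \<noteq> col g" if "a \<in> K \<union> P" for a
    using that
  proof
    assume "a \<in> K"
    then have "a \<in> M" "a \<noteq> r" using \<open>K \<subseteq> M\<close> \<open>r \<notin> K\<close> by auto
    then have "y \<inter> ends a = {}" using aux_pair_meets_one_edge[OF aux mM y(1,2)] y(3) by blast
    moreover have "col a \<noteq> col g"
      using \<open>a \<in> M\<close> g(3) unfolding unused_colours_def by (metis ComplD imageI)
    ultimately show ?thesis using g(2) by blast
  next
    assume "a \<in> P"
    then have "col a \<noteq> col g" using g(4) by (metis image_eqI)
    then show ?thesis using \<open>a \<in> P\<close> P_avoids_y g(2) by blast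
  qed
  then have "rainbow_matching E ends col ((K \<union> P) \<union> {g})"
    using rainbow_matching_Un[OF KP rainbow_matching_singleton[OF g(1)]] by blast
  then show ?thesis by (simp add: Un_commute)
qed

lemma aux_matching_augment:
  assumes rm: "rainbow_matching E ends col M" and aux: "aux_matching t V E ends col M N"
    and "finite R"
  shows "R \<subseteq> M_N ends M N \<Longrightarrow> K \<subseteq> M \<Longrightarrow> K \<inter> R = {} \<Longrightarrow> finite K \<Longrightarrow> finite P \<Longrightarrow>
    K \<inter> P = {} \<Longrightarrow> rainbow_matching E ends col (K \<union> P) \<Longrightarrow>
    (\<forall>r\<in>R. \<forall>y\<in>N. y \<inter> ends r \<noteq> {} \<longrightarrow> (\<forall>p\<in>P. ends p \<inter> y = {})) \<Longrightarrow>
    card R + card (col ` P \<inter> unused_colours col M) \<le> t \<Longrightarrow>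
    \<exists>M'. rainbow_matching E ends col M' \<and> card M' = card K + card P + card R"
  using \<open>finite R\<close>
proof (induction R arbitrary: P rule: finite_induct)
  case empty
  then show ?case by (intro exI[of _ "K \<union> P"]) (simp add: card_Un_disjoint)
next
  case (insert r R)
  let ?C0 = "unused_colours col M"
  have mM: "matching E ends M" using rm unfolding rainbow_matching_def by simp
  obtain y where y: "y \<in> N" "y \<inter> ends r \<noteq> {}" and rM: "r \<in> M"
    using insert.prems(1) unfolding M_N_def by blast
  obtain u v where uv: "y = {u, v}" "u \<notin> VM ends M" by (rule aux_matching_pairE[OF aux y(1)])
  define F where "F = col ` P \<inter> ?C0"
  have fF: "finite F" using insert.prems(5) unfolding F_def by simp
  have count: "Suc (card R) + card F \<le> t" using insert.prems(9) insert.hyps unfolding F_def by simp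
  then have "card F < t" by linarith
  then obtain g where g: "g \<in> E" "ends g = y" "col g \<in> ?C0" "col g \<notin> F"
    by (rule aux_pair_edge_avoiding_colours[OF aux y(1) fF])
  have P_avoids_y: "\<forall>p\<in>P. ends p \<inter> y = {}" using insert.prems(8) y by blast
  have "col g \<notin> col ` P" using g(3,4) unfolding F_def by blast
  then have rm': "rainbow_matching E ends col (K \<union> insert g P)"
    using rainbow_matching_add_aux_edge[OF aux mM y(1) rM y(2) insert.prems(2) _ insert.prems(7)
        P_avoids_y g(1-3)] insert.prems(3) by blast
  have avoids': "\<forall>r'\<in>R. \<forall>y'\<in>N. y' \<inter> ends r' \<noteq> {} \<longrightarrow> (\<forall>p\<in>insert g P. ends p \<inter> y' = {})"
  proof (intro ballI impI)
    fix r' y' p assume r': "r' \<in> R" "y' \<in> N" "y' \<inter> ends r' \<noteq> {}" and p: "p \<in> insert g P"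
    have "r' \<in> M" using r'(1) insert.prems(1) unfolding M_N_def by blast
    then have "y' \<noteq> y"
      using aux_pair_meets_one_edge[OF aux mM y(1) rM] y(2) r'(1,3) insert.hyps(2) by blast
    then have "ends g \<inter> y' = {}" using aux_matching_pairs_disjoint[OF aux y(1) r'(2)] g(2) by metis
    moreover have "ends q \<inter> y' = {}" if "q \<in> P" for q
      using insert.prems(8) r' that by simp
    ultimately show "ends p \<inter> y' = {}" using p by blast
  qed
  have "col ` insert g P \<inter> ?C0 = insert (col g) F" using g(3) unfolding F_def by auto
  then have count': "card R + card (col ` insert g P \<inter> ?C0) \<le> t"
    using count fF g(4) by simp
  have "g \<notin> M" using g(2) uv unfolding VM_def by auto
  then have "g \<notin> K" using insert.prems(2) by blast
  then have "K \<inter> insert g P = {}" using insert.prems(6) by blast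
  moreover have "R \<subseteq> M_N ends M N" "K \<inter> R = {}" "finite (insert g P)"
    using insert.prems(1,3,5) by auto
  ultimately obtain M' where "rainbow_matching E ends col M'"
      "card M' = card K + card (insert g P) + card R"
    using insert.IH[OF _ insert.prems(2) _ insert.prems(4) _ _ rm' avoids' count'] by blast
  moreover have "g \<notin> P" using P_avoids_y g(2) uv(1) by fastforce
  ultimately show ?case using insert.prems(5) insert.hyps by (intro exI[of _ M']) simp
qed

text \<open>P is a set of new edges. Its endpoints lie in X, where they can only conflict with the
  forced edges F of M, or in B, which misses N and the edges of M outside M_N.\<close>

locale rainbow_exchange =
  fixes V :: "'v set" and E :: "'e set" and ends :: "'e \<Rightarrow> 'v set" and col :: "'e \<Rightarrow> 'c"
    and t :: nat and M :: "'e set" and N :: "'v set set"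
    and F P :: "'e set" and X B :: "'v set"
  assumes multigraph: "multigraph V E ends"
    and rainbow_M: "rainbow_matching E ends col M"
    and aux: "aux_matching t V E ends col M N"
    and forced_sub: "F \<subseteq> M"
    and forced_edges: "\<And>k. k \<in> M \<Longrightarrow> ends k \<inter> X \<noteq> {} \<Longrightarrow> k \<in> F"
    and forced_pairs:
      "\<And>y r. y \<in> N \<Longrightarrow> y \<inter> X \<noteq> {} \<Longrightarrow> r \<in> M \<Longrightarrow> y \<inter> ends r \<noteq> {} \<Longrightarrow> r \<in> F"
    and rainbow_P: "rainbow_matching E ends col P"
    and col_P: "col ` P \<subseteq> unused_colours col M \<union> C_N ends col M N"
    and ends_P: "\<Union> (ends ` P) \<subseteq> X \<union> B"
    and outside: "B \<inter> \<Union> (N \<union> ends ` (M - M_N ends M N)) = {}"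
    and finite_B: "finite B"
begin

definition clashing :: "'e set" where
  "clashing = {r \<in> M_N ends M N - F. ends r \<inter> B \<noteq> {} \<or> col r \<in> col ` P}"

definition kept :: "'e set" where
  "kept = M - (F \<union> clashing)"

lemma matching_M: "matching E ends M"
  using rainbow_M unfolding rainbow_matching_def by simp

lemma finite_M: "finite M" and finite_P: "finite P"
proof -
  have "finite E" "M \<subseteq> E" "P \<subseteq> E"
    using multigraph rainbow_M rainbow_P
    unfolding multigraph_def rainbow_matching_def matching_def by simp_all
  then show "finite M" "finite P" by (auto intro: finite_subset)
qed

lemma clashing_sub: "clashing \<subseteq> M"
  unfolding clashing_def M_N_def by blast

lemma mem_M_N_if_meets_B:
  assumes "k \<in> M" "ends k \<inter> B \<noteq> {}"
  shows "k \<in> M_N ends M N"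
proof (rule ccontr)
  assume "k \<notin> M_N ends M N"
  then have "ends k \<subseteq> \<Union> (N \<union> ends ` (M - M_N ends M N))" using assms(1) by blast
  then show False using assms(2) outside by blast
qed

lemma kept_apart_P:
  assumes "k \<in> kept" "p \<in> P"
  shows "ends k \<inter> ends p = {} \<and> col k \<noteq> col p"
proof
  have k: "k \<in> M" "k \<notin> F" "k \<notin> clashing" using assms(1) unfolding kept_def by simp_all
  show "ends k \<inter> ends p = {}"
  proof (rule ccontr)
    assume "ends k \<inter> ends p \<noteq> {}"
    then obtain z where z: "z \<in> ends k" "z \<in> ends p" by blast
    then have "z \<in> X \<union> B" using ends_P assms(2) by blast
    then show False
    proof
      assume "z \<in> X"
      then show False using forced_edges[OF k(1)] z(1) k(2) by blast
    next
      assume "z \<in> B"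
      then have "ends k \<inter> B \<noteq> {}" using z(1) by blast
      then show False using mem_M_N_if_meets_B[OF k(1)] k unfolding clashing_def by blast
    qed
  qed
  show "col k \<noteq> col p"
  proof
    assume "col k = col p"
    then have "col k \<in> col ` P" using assms(2) by simp
    moreover from this have "k \<in> M_N ends M N"
      using mem_M_N_if_colour[OF rainbow_M k(1)] col_P by blast
    ultimately show False using k(2,3) unfolding clashing_def by blast
  qed
qed

lemma kept_disjoint_P: "kept \<inter> P = {}"
proof (rule ccontr)
  assume "kept \<inter> P \<noteq> {}"
  then obtain p where "p \<in> kept" "p \<in> P" by blast
  then have "ends p = {}" using kept_apart_P[of p p] by simp
  moreover have "p \<in> E" using rainbow_P \<open>p \<in> P\<close> unfolding rainbow_matching_def matching_def by blast
  then have "card (ends p) = 2" using multigraph unfolding multigraph_def by blast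
  ultimately show False by simp
qed

lemma rainbow_kept_Un_P: "rainbow_matching E ends col (kept \<union> P)"
proof (rule rainbow_matching_Un[OF rainbow_matching_subset[OF rainbow_M] rainbow_P kept_apart_P])
  show "kept \<subseteq> M" unfolding kept_def by blast
qed

lemma P_avoids_pairs_of_clashing:
  "\<forall>r\<in>clashing. \<forall>y\<in>N. y \<inter> ends r \<noteq> {} \<longrightarrow> (\<forall>p\<in>P. ends p \<inter> y = {})"
proof (intro ballI impI)
  fix r y p assume r: "r \<in> clashing" "y \<in> N" "y \<inter> ends r \<noteq> {}" and p: "p \<in> P"
  have "r \<in> M" using r(1) clashing_sub by blast
  moreover have "r \<notin> F" using r(1) unfolding clashing_def by blast
  ultimately have "y \<inter> X = {}" using forced_pairs[OF r(2) _ _ r(3)] by blast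
  moreover have "y \<inter> B = {}" using r(2) outside by blast
  ultimately show "ends p \<inter> y = {}" using ends_P p by blast
qed

lemma card_clashing_le:
  "card clashing + card (col ` P \<inter> unused_colours col M) \<le> card B + card P"
proof -
  let ?C0 = "unused_colours col M"
  let ?R_B = "{r \<in> M. ends r \<inter> B \<noteq> {}}" and ?R_P = "{r \<in> M. col r \<in> col ` P}"
  have fcP: "finite (col ` P)" using finite_P by simp
  have "clashing \<subseteq> ?R_B \<union> ?R_P" using clashing_sub unfolding clashing_def by blast
  then have "card clashing \<le> card (?R_B \<union> ?R_P)" by (rule card_mono[rotated]) (simp add: finite_M)
  also have "\<dots> \<le> card ?R_B + card ?R_P" by (rule card_Un_le)
  also have "\<dots> \<le> card B + card (col ` P - ?C0)"
    using card_matching_edges_meeting_le[OF matching_M finite_M finite_B]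
      card_rainbow_edges_coloured_le[OF rainbow_M fcP] by linarith
  finally have "card clashing + card (col ` P \<inter> ?C0) \<le> card B + card (col ` P)"
    using card_Int_Diff[OF fcP, of ?C0] by linarith
  moreover have "card (col ` P) = card P"
    using rainbow_P unfolding rainbow_matching_def by (simp add: card_image)
  ultimately show ?thesis by linarith
qed

lemma card_M_le: "card M \<le> card kept + card F + card clashing"
proof -
  have "M \<subseteq> kept \<union> (F \<union> clashing)" unfolding kept_def by blast
  then have "card M \<le> card (kept \<union> (F \<union> clashing))"
    by (rule card_mono[rotated])
      (use finite_M forced_sub clashing_sub in \<open>auto simp: kept_def intro: finite_subset\<close>)
  also have "\<dots> \<le> card kept + card F + card clashing"
    using card_Un_le[of kept "F \<union> clashing"] card_Un_le[of F clashing] by linarith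
  finally show ?thesis .
qed

lemma larger_rainbow_matching:
  assumes "card B + card P \<le> t"
  obtains M' where "rainbow_matching E ends col M'" "card M + card P \<le> card M' + card F"
proof -
  have "clashing \<subseteq> M_N ends M N" "kept \<subseteq> M" "kept \<inter> clashing = {}" "finite kept"
    using finite_M unfolding clashing_def kept_def by auto
  moreover have "card clashing + card (col ` P \<inter> unused_colours col M) \<le> t"
    using card_clashing_le assms by linarith
  ultimately obtain M' where M': "rainbow_matching E ends col M'"
      "card M' = card kept + card P + card clashing"
    using aux_matching_augment[OF rainbow_M aux finite_subset[OF clashing_sub finite_M] _ _ _ _
        finite_P kept_disjoint_P rainbow_kept_Un_P P_avoids_pairs_of_clashing] by blast
  have "card M + card P \<le> card M' + card F" using M'(2) card_M_le by linarith
  with M'(1) show thesis by (rule that)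
qed

lemma card_le_card_forced_if_max:
  assumes "max_rainbow_matching E ends col M" "card B + card P \<le> t"
  shows "card P \<le> card F"
proof -
  obtain M' where "rainbow_matching E ends col M'" "card M + card P \<le> card M' + card F"
    using larger_rainbow_matching[OF assms(2)] .
  moreover have "card M' \<le> card M"
    using assms(1) \<open>rainbow_matching E ends col M'\<close> unfolding max_rainbow_matching_def by blast
  ultimately show ?thesis by linarith
qed

end

lemma pair_of_reduced_matching_touches_one_edge:
  assumes mM: "matching E ends M" and aux: "aux_matching t V E ends col M N"
    and x: "x \<in> N \<union> ends ` (M - M_N ends M N)"
  obtains f where "f \<in> M" "\<And>k. k \<in> M \<Longrightarrow> ends k \<inter> x \<noteq> {} \<Longrightarrow> k = f"
    "\<And>y r. y \<in> N \<Longrightarrow> y \<inter> x \<noteq> {} \<Longrightarrow> r \<in> M \<Longrightarrow> y \<inter> ends r \<noteq> {} \<Longrightarrow> r = f"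
  using x
proof
  assume "x \<in> N"
  then obtain u v where uv: "x = {u, v}" "u \<notin> VM ends M" "v \<in> VM ends M"
    by (rule aux_matching_pairE[OF aux])
  then obtain f where f: "f \<in> M" "v \<in> ends f" unfolding VM_def by blast
  have edge: "k = f" if "k \<in> M" "ends k \<inter> x \<noteq> {}" for k
  proof -
    have "u \<notin> ends k" using uv(2) that(1) unfolding VM_def by blast
    then have "v \<in> ends k" using that(2) uv(1) by blast
    then show ?thesis using matching_common_vertex_eq[OF mM that(1) f(1)] f(2) by blast
  qed
  have pair: "r = f" if "y \<in> N" "y \<inter> x \<noteq> {}" "r \<in> M" "y \<inter> ends r \<noteq> {}" for y r
  proof -
    have "y = x" using aux_matching_pairs_disjoint[OF aux that(1) \<open>x \<in> N\<close>] that(2) by blast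
    then have "ends r \<inter> x \<noteq> {}" using that(4) by blast
    then show ?thesis by (rule edge[OF that(3)])
  qed
  show thesis by (rule that[OF f(1) edge pair])
next
  assume "x \<in> ends ` (M - M_N ends M N)"
  then obtain f where f: "f \<in> M" "f \<notin> M_N ends M N" "x = ends f" by blast
  have edge: "k = f" if "k \<in> M" "ends k \<inter> x \<noteq> {}" for k
    using matching_common_vertex_eq[OF mM that(1) f(1)] that(2) f(3) by blast
  have pair: "r = f" if "y \<in> N" "y \<inter> x \<noteq> {}" "r \<in> M" "y \<inter> ends r \<noteq> {}" for y r
  proof -
    have "f \<in> M_N ends M N" using f(1,3) that(1,2) unfolding M_N_def by blast
    then show ?thesis using f(2) by contradiction
  qed
  show thesis by (rule that[OF f(1) edge pair])
qed

lemma card_2_eq_pair: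
  assumes "card S = 2" "a \<in> S" "b \<in> S" "a \<noteq> b"
  shows "S = {a, b}"
proof -
  obtain p q where "S = {p, q}" using assms(1) by (auto simp: card_2_iff)
  then show ?thesis using assms(2-4) by auto
qed

lemma rainbow_hornE:
  assumes mg: "multigraph V E ends" and "rainbow_horn E ends col C L x"
  obtains e1 e2 b1 b2 where "x \<in> L" "rainbow_matching E ends col {e1, e2}" "e1 \<noteq> e2"
    "col ` {e1, e2} \<subseteq> C" "\<Union> (ends ` {e1, e2}) \<subseteq> x \<union> {b1, b2}" "b1 \<notin> \<Union> L" "b2 \<notin> \<Union> L"
proof -
  obtain e1 e2 where x: "x \<in> L" and e: "e1 \<in> E" "e2 \<in> E" "ends e1 \<inter> ends e2 = {}"
      "col e1 \<in> C" "col e2 \<in> C" "col e1 \<noteq> col e2"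
    and horns: "ends e1 \<inter> x \<noteq> {}" "ends e1 - \<Union> L \<noteq> {}" "ends e2 \<inter> x \<noteq> {}" "ends e2 - \<Union> L \<noteq> {}"
    using assms(2) unfolding rainbow_horn_def by blast
  have horn_ends: "\<exists>b. ends e \<subseteq> x \<union> {b} \<and> b \<notin> \<Union> L"
    if "e \<in> E" and meets: "ends e \<inter> x \<noteq> {}" "ends e - \<Union> L \<noteq> {}" for e
  proof -
    obtain a b where "a \<in> ends e" "a \<in> x" "b \<in> ends e" "b \<notin> \<Union> L" using meets by blast
    moreover have "card (ends e) = 2" using mg \<open>e \<in> E\<close> unfolding multigraph_def by blast
    moreover have "a \<noteq> b" using \<open>a \<in> x\<close> \<open>b \<notin> \<Union> L\<close> x by blast
    ultimately have "ends e = {a, b}" by (simp add: card_2_eq_pair)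
    then show ?thesis using \<open>a \<in> x\<close> \<open>b \<notin> \<Union> L\<close> by auto
  qed
  obtain b1 b2 where b: "ends e1 \<subseteq> x \<union> {b1}" "b1 \<notin> \<Union> L" "ends e2 \<subseteq> x \<union> {b2}" "b2 \<notin> \<Union> L"
    using horn_ends[OF e(1) horns(1,2)] horn_ends[OF e(2) horns(3,4)] by blast
  have "rainbow_matching E ends col ({e1} \<union> {e2})"
    by (rule rainbow_matching_Un[OF rainbow_matching_singleton[OF e(1)]
          rainbow_matching_singleton[OF e(2)]]) (use e(3,6) in simp)
  then have "rainbow_matching E ends col {e1, e2}" by (simp add: insert_commute)
  moreover have "e1 \<noteq> e2" using e(6) by blast
  moreover have "\<Union> (ends ` {e1, e2}) \<subseteq> x \<union> {b1, b2}" using b(1,3) by auto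
  ultimately show thesis using that x e(4,5) b(2,4) by simp
qed

lemma max_rainbow_matching_no_free_edge:
  assumes mg: "multigraph V E ends" and mx: "max_rainbow_matching E ends col M"
    and aux: "aux_matching t V E ends col M N" and "3 \<le> t"
    and e: "e \<in> E" "col e \<in> unused_colours col M \<union> C_N ends col M N"
    "ends e \<inter> \<Union> (N \<union> ends ` (M - M_N ends M N)) = {}"
  shows False
proof -
  have card_e: "card (ends e) = 2" using mg e(1) unfolding multigraph_def by blast
  interpret rainbow_exchange V E ends col t M N "{}" "{e}" "{}" "ends e"
  proof unfold_locales
    show "rainbow_matching E ends col M" using mx unfolding max_rainbow_matching_def by simp
    show "rainbow_matching E ends col {e}" by (rule rainbow_matching_singleton[OF e(1)])
    show "finite (ends e)" using card_e by (simp add: card_ge_0_finite)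
  qed (use mg aux e(2,3) in simp_all)
  have "card {e} \<le> card ({} :: 'e set)"
    using card_le_card_forced_if_max[OF mx] card_e \<open>3 \<le> t\<close> by simp
  then show False by simp
qed

lemma max_rainbow_matching_no_rainbow_horn:
  assumes mg: "multigraph V E ends" and mx: "max_rainbow_matching E ends col M"
    and aux: "aux_matching t V E ends col M N" and "4 \<le> t"
    and horn: "rainbow_horn E ends col (unused_colours col M \<union> C_N ends col M N)
      (N \<union> ends ` (M - M_N ends M N)) x"
  shows False
proof -
  have rm: "rainbow_matching E ends col M" using mx unfolding max_rainbow_matching_def by simp
  then have mM: "matching E ends M" unfolding rainbow_matching_def by simp
  obtain e1 e2 b1 b2 where x: "x \<in> N \<union> ends ` (M - M_N ends M N)"
    and P: "rainbow_matching E ends col {e1, e2}" "e1 \<noteq> e2"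
      "col ` {e1, e2} \<subseteq> unused_colours col M \<union> C_N ends col M N"
      "\<Union> (ends ` {e1, e2}) \<subseteq> x \<union> {b1, b2}"
    and b: "b1 \<notin> \<Union> (N \<union> ends ` (M - M_N ends M N))" "b2 \<notin> \<Union> (N \<union> ends ` (M - M_N ends M N))"
    by (rule rainbow_hornE[OF mg horn])
  obtain f where f: "f \<in> M" "\<And>k. k \<in> M \<Longrightarrow> ends k \<inter> x \<noteq> {} \<Longrightarrow> k = f"
    "\<And>y r. y \<in> N \<Longrightarrow> y \<inter> x \<noteq> {} \<Longrightarrow> r \<in> M \<Longrightarrow> y \<inter> ends r \<noteq> {} \<Longrightarrow> r = f"
    using pair_of_reduced_matching_touches_one_edge[OF mM aux x] by blast
  interpret rainbow_exchange V E ends col t M N "{f}" "{e1, e2}" x "{b1, b2}"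
  proof unfold_locales
    show "k \<in> {f}" if "k \<in> M" "ends k \<inter> x \<noteq> {}" for k using f(2)[OF that] by simp
    show "r \<in> {f}" if "y \<in> N" "y \<inter> x \<noteq> {}" "r \<in> M" "y \<inter> ends r \<noteq> {}" for y r
      using f(3)[OF that] by simp
    show "{b1, b2} \<inter> \<Union> (N \<union> ends ` (M - M_N ends M N)) = {}" using b by blast
  qed (use mg rm aux f(1) P in simp_all)
  have "card {e1, e2} \<le> card {f}"
    by (rule card_le_card_forced_if_max[OF mx]) (use P(2) \<open>4 \<le> t\<close> in \<open>simp add: card_insert_if\<close>)
  then show False using P(2) by simp
qed

theorem lemma2p6:
  fixes V :: "'v set" and E :: "'e set" and ends :: "'e \<Rightarrow> 'v set" and col :: "'e \<Rightarrow> 'c"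
    and t :: nat and M :: "'e set" and N :: "'v set set"
  assumes "multigraph V E ends"
    and "t \<ge> 5"
    and "max_rainbow_matching E ends col M"
    and "aux_matching t V E ends col M N"
  shows "\<not> (\<exists>e\<in>E. col e \<in> unused_colours col M \<union> C_N ends col M N \<and>
              ends e \<inter> \<Union> (N \<union> ends ` (M - M_N ends M N)) = {}) \<and>
         \<not> (\<exists>x. rainbow_horn E ends col (unused_colours col M \<union> C_N ends col M N)
                 (N \<union> ends ` (M - M_N ends M N)) x)"
  using max_rainbow_matching_no_free_edge[OF assms(1,3,4)]
    max_rainbow_matching_no_rainbow_horn[OF assms(1,3,4)] \<open>t \<ge> 5\<close> by auto

end
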